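(* Let $T>0$ and constants $K_1\ge0$, $K_2\ne0$ with $K_1+K_2\ge0$; put $\beta=K_1/K_2$ and, for $t\in[0,T]$, $$\Lambda(t,T)=1+\frac{K_1}{K_2}\Big(1-e^{-\frac{K_2(T-t)}{2}}\Big)+\frac{K_1}{K_2}\Big(1-e^{-\frac{K_2t}{2}}\Big)+\Big(\frac{K_1}{K_2}\Big)^2\Big[\Big(1-e^{-\frac{K_2t}{2}}\Big)+\frac12\Big(e^{-\frac{K_2(T+t)}{2}}-e^{-\frac{K_2(T-t)}{2}}\Big)\Big].$$ (i) If $K_2>0$, then, writing $S=\sqrt{1+\frac{\beta}{2+\beta}\big(1-e^{-\frac{K_2T}{2}}\big)}$, $$\sup_{t\in[0,T]}\Lambda(t,T)=(1+\beta)^2-\Big(\beta+\frac{\beta^2}{2}\Big)S\,e^{-\frac{K_2T}{4}}-\frac{\beta+\beta^2-\frac{\beta^2}{2}e^{-\frac{K_2T}{2}}}{S}\,e^{-\frac{K_2T}{4}}.$$ (ii) If $K_2<0$, then $$\sup_{t\in[0,T]}\Lambda(t,T)=\frac12+\frac12\Big(1+\frac{K_1}{K_2}\Big[1-e^{-\frac{K_2T}{2}}\Big]\Big)^2.$$ *)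

theory Defs
  imports Complex_Main
begin

definition Lambda :: "real \<Rightarrow> real \<Rightarrow> real \<Rightarrow> real \<Rightarrow> real" where
  "Lambda K1 K2 T t =
     1 + (K1 / K2) * (1 - exp (- (K2 * (T - t) / 2)))
       + (K1 / K2) * (1 - exp (- (K2 * t / 2)))
       + (K1 / K2)^2 * ((1 - exp (- (K2 * t / 2)))
            + (1/2) * (exp (- (K2 * (T + t) / 2)) - exp (- (K2 * (T - t) / 2))))"

end

theory Submission
  imports Defs
begin

text \<open>In the variable \<open>x = exp (-K2 t / 2)\<close>, which runs between \<open>E = exp (-K2 T / 2)\<close> and \<open>1\<close>,
  \<open>\<Lambda>\<close> has the shape \<open>P - A x - B / x\<close>. For \<open>K2 > 0\<close> both coefficients are nonnegative and
  the maximum sits at the balance point \<open>A x\<^sup>2 = B\<close>, which lies in \<open>[E, 1]\<close>; for \<open>K2 < 0\<close> the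
  function is increasing on \<open>[1, E]\<close>, so the supremum is the value at \<open>t = T\<close>.\<close>

lemma Lambda_eq_affine_minus_reciprocal:
  fixes K1 K2 T t :: real
  assumes "K2 \<noteq> 0"
  defines "b \<equiv> K1 / K2" and "E \<equiv> exp (- (K2 * T / 2))" and "x \<equiv> exp (- (K2 * t / 2))"
  shows "Lambda K1 K2 T t = (1 + b)^2 - (b + b^2 - b^2 * E / 2) * x - (b + b^2 / 2) * E / x"
proof -
  have x_pos: "x > 0" unfolding x_def by simp
  have "exp (- (K2 * (T - t) / 2)) = exp (- (K2 * T / 2) - (- (K2 * t / 2)))"
    by (simp add: field_simps)
  then have exp_diff_eq: "exp (- (K2 * (T - t) / 2)) = E / x"
    unfolding E_def x_def exp_diff .
  have "exp (- (K2 * (T + t) / 2)) = exp (- (K2 * T / 2) + (- (K2 * t / 2)))"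
    by (simp add: field_simps)
  then have exp_sum_eq: "exp (- (K2 * (T + t) / 2)) = E * x"
    unfolding E_def x_def exp_add .
  show ?thesis
    unfolding Lambda_def exp_diff_eq exp_sum_eq b_def[symmetric] x_def[symmetric]
    using x_pos by (simp add: field_simps power2_eq_square)
qed

lemma affine_minus_reciprocal_diff:
  fixes P A B x y :: real
  assumes "x > 0" "y > 0"
  shows "(P - A * y - B / y) - (P - A * x - B / x) = (y - x) * (B - A * x * y) / (x * y)"
  using assms by (simp add: field_simps)

lemma affine_minus_reciprocal_le_balanced:
  fixes P A B x y :: real
  assumes "A \<ge> 0" "x > 0" "y > 0" "B = A * y^2"
  shows "P - A * x - B / x \<le> P - A * y - B / y"
proof -
  have "(y - x) * (B - A * x * y) = A * y * (y - x)^2"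
    unfolding assms(4) by (simp add: algebra_simps power2_eq_square)
  then have "0 \<le> (y - x) * (B - A * x * y) / (x * y)"
    using assms(1-3) by simp
  then show ?thesis
    using affine_minus_reciprocal_diff[OF assms(2,3), of P A B] by linarith
qed

lemma affine_minus_reciprocal_mono:
  fixes P A B x y :: real
  assumes "0 < x" "x \<le> y" "A * x * y \<le> B"
  shows "P - A * x - B / x \<le> P - A * y - B / y"
proof -
  have "0 \<le> (y - x) * (B - A * x * y) / (x * y)"
    using assms by simp
  moreover have "y > 0" using assms(1,2) by linarith
  ultimately show ?thesis
    using affine_minus_reciprocal_diff[of x y P A B] assms(1) by linarith
qed

lemma Lambda_at_endpoint:
  fixes K1 K2 T :: real
  assumes "K2 \<noteq> 0"
  shows "Lambda K1 K2 T T = 1/2 + 1/2 * (1 + K1 / K2 * (1 - exp (- (K2 * T / 2))))^2"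
proof -
  have "(1 + b)^2 - (b + b^2 - b^2 * E / 2) * E - (b + b^2 / 2) * E / E = 1/2 + 1/2 * (1 + b * (1 - E))^2"
    if "E > 0" for b E :: real
    using that by (simp add: field_simps power2_eq_square)
  then show ?thesis
    unfolding Lambda_eq_affine_minus_reciprocal[OF assms] by simp
qed

lemma exp_neg_half_scaled_surj:
  fixes K2 T y :: real
  assumes "K2 > 0" "exp (- (K2 * T / 2)) \<le> y" "y \<le> 1"
  obtains t where "t \<in> {0..T}" "exp (- (K2 * t / 2)) = y"
proof
  have y_pos: "y > 0" by (rule less_le_trans[OF exp_gt_zero assms(2)])
  show "exp (- (K2 * (- 2 * ln y / K2) / 2)) = y"
    using assms(1) y_pos by simp
  have "- (K2 * T / 2) \<le> ln y"
    using assms(2) y_pos by (metis exp_le_cancel_iff exp_ln)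
  moreover have "ln y \<le> 0" using assms(3) y_pos by simp
  ultimately show "- 2 * ln y / K2 \<in> {0..T}"
    using assms(1) by (simp add: field_simps)
qed

lemma SUP_Lambda_pos:
  fixes K1 K2 T :: real
  assumes "T > 0" "K1 \<ge> 0" "K2 > 0"
  defines "\<beta> \<equiv> K1 / K2" and "S \<equiv> sqrt (1 + K1 / K2 / (2 + K1 / K2) * (1 - exp (- (K2 * T / 2))))"
  shows "(SUP t\<in>{0..T}. Lambda K1 K2 T t) =
           (1 + \<beta>)^2 - (\<beta> + \<beta>^2 / 2) * S * exp (- (K2 * T / 4))
           - (\<beta> + \<beta>^2 - \<beta>^2 / 2 * exp (- (K2 * T / 2))) / S * exp (- (K2 * T / 4))"
proof -
  define E where "E = exp (- (K2 * T / 2))"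
  define r where "r = exp (- (K2 * T / 4))"
  define A where "A = \<beta> + \<beta>^2 - \<beta>^2 * E / 2"
  define c where "c = \<beta> + \<beta>^2 / 2"
  define k where "k = \<beta> / (2 + \<beta>)"
  have \<beta>_nonneg: "\<beta> \<ge> 0" unfolding \<beta>_def using assms(2,3) by simp
  have r_pos: "r > 0" and r_lt_1: "r < 1" unfolding r_def using assms(1,3) by simp_all
  have E_eq: "E = r^2" unfolding E_def r_def by (simp add: power2_eq_square flip: exp_add)
  have E_lt_1: "E < 1" using E_eq r_pos r_lt_1 by (simp add: power_less_one_iff)
  have k_bounds: "0 \<le> k" "k < 1" unfolding k_def using \<beta>_nonneg by simp_all
  have S_eq: "S = sqrt (1 + k * (1 - E))" unfolding S_def k_def E_def \<beta>_def ..
  have S_sq: "S^2 = 1 + k * (1 - E)" unfolding S_eq using k_bounds E_lt_1 by simp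
  have S_ge_1: "S \<ge> 1" unfolding S_eq using k_bounds E_lt_1 by simp
  have A_eq: "A = c * S^2"
    unfolding S_sq A_def c_def k_def using \<beta>_nonneg by (simp add: field_simps power2_eq_square)
  have A_nonneg: "A \<ge> 0" unfolding A_eq c_def using \<beta>_nonneg by simp
  \<comment> \<open>the balance point \<open>r / S\<close> lies in \<open>[E, 1]\<close> because \<open>E S\<^sup>2 = (1 - u)(1 + k u) \<le> 1\<close> for \<open>u = 1 - E\<close>\<close>
  have "(r * S)^2 \<le> 1^2"
  proof -
    have "k * (1 - E) \<ge> 0" using k_bounds E_lt_1 by simp
    then have "(1 - E) * (k - 1 - k * (1 - E)) \<le> 0"
      using mult_nonneg_nonpos[of "1 - E" "k - 1 - k * (1 - E)"] k_bounds E_lt_1 by linarith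
    then show ?thesis unfolding power_mult_distrib S_sq E_eq[symmetric]
      by (simp add: algebra_simps)
  qed
  then have "r * S \<le> 1" by (rule power2_le_imp_le) simp
  then have balance_range: "E \<le> r / S" "r / S \<le> 1"
    using r_pos r_lt_1 S_ge_1 by (simp_all add: E_eq field_simps power2_eq_square)
  obtain t0 where t0: "t0 \<in> {0..T}" "exp (- (K2 * t0 / 2)) = r / S"
    using exp_neg_half_scaled_surj[OF assms(3) balance_range[unfolded E_def]] by blast
  have balanced: "c * E = A * (r / S)^2"
    unfolding A_eq E_eq using S_ge_1 by (simp add: field_simps)
  have Lambda_eq: "Lambda K1 K2 T t = (1 + \<beta>)^2 - A * exp (- (K2 * t / 2)) - c * E / exp (- (K2 * t / 2))"
    for t
    unfolding Lambda_eq_affine_minus_reciprocal[OF assms(3)[THEN less_imp_neq, symmetric]]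
    by (simp add: A_def c_def E_def \<beta>_def mult.assoc)
  have "Lambda K1 K2 T t \<le> Lambda K1 K2 T t0" for t
  proof -
    have "r / S > 0" using r_pos S_ge_1 by simp
    then show ?thesis
      unfolding Lambda_eq t0(2) balanced
      by (intro affine_minus_reciprocal_le_balanced[OF A_nonneg]) simp_all
  qed
  then have "(SUP t\<in>{0..T}. Lambda K1 K2 T t) = Lambda K1 K2 T t0"
    using t0(1) by (intro cSup_eq_maximum) auto
  also have "\<dots> = (1 + \<beta>)^2 - c * S * r - A / S * r"
    unfolding Lambda_eq t0(2) E_eq using S_ge_1 r_pos by (simp add: field_simps power2_eq_square)
  finally show ?thesis unfolding A_def c_def E_def r_def by (simp add: mult.commute)
qed

lemma SUP_Lambda_neg:
  fixes K1 K2 T :: real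
  assumes "T \<ge> 0" "K2 < 0" "K1 + K2 \<ge> 0"
  shows "(SUP t\<in>{0..T}. Lambda K1 K2 T t) =
           1/2 + 1/2 * (1 + K1 / K2 * (1 - exp (- (K2 * T / 2))))^2"
proof -
  define \<beta> where "\<beta> = K1 / K2"
  define E where "E = exp (- (K2 * T / 2))"
  define A where "A = \<beta> + \<beta>^2 - \<beta>^2 * E / 2"
  define c where "c = \<beta> + \<beta>^2 / 2"
  have E_ge_1: "E \<ge> 1" unfolding E_def using assms(1,2) by (simp add: mult_nonpos_nonneg)
  have \<beta>_le: "\<beta> \<le> -1" unfolding \<beta>_def using assms(2,3) by (simp add: field_simps)
  have A_le_c: "A \<le> c" unfolding A_def c_def using mult_left_mono[OF E_ge_1, of "\<beta>^2"] by simp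
  have "\<beta> * (1 - E) \<ge> 0" using \<beta>_le E_ge_1 by (simp add: mult_nonpos_nonpos)
  then have "0 \<le> \<beta> * (1 - E) * (2 + \<beta> * (1 - E))" by simp
  also have "\<dots> = 2 * (c - A * E)"
    unfolding A_def c_def by (simp add: algebra_simps power2_eq_square)
  finally have AE_le_c: "A * E \<le> c" by simp
  have Lambda_eq: "Lambda K1 K2 T t = (1 + \<beta>)^2 - A * exp (- (K2 * t / 2)) - c * E / exp (- (K2 * t / 2))"
    for t
    unfolding Lambda_eq_affine_minus_reciprocal[OF assms(2)[THEN less_imp_neq]]
    by (simp add: A_def c_def E_def \<beta>_def mult.assoc)
  have "Lambda K1 K2 T t \<le> Lambda K1 K2 T T" if t: "t \<in> {0..T}" for t
  proof -
    define x where "x = exp (- (K2 * t / 2))"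
    have x_range: "1 \<le> x" "x \<le> E"
      unfolding x_def E_def using t assms(2) by (simp_all add: mult_nonpos_nonneg mult_left_mono_neg)
    \<comment> \<open>\<open>A x \<le> c\<close> holds at both ends of \<open>[1, E]\<close>, hence everywhere since it is linear in \<open>x\<close>\<close>
    have "A * x \<le> c"
    proof (cases "A \<ge> 0")
      case True
      then show ?thesis using mult_left_mono[OF x_range(2) True] AE_le_c by linarith
    next
      case False
      then have "A * x \<le> A * 1" using x_range(1) by (intro mult_left_mono_neg) simp_all
      then show ?thesis using A_le_c by simp
    qed
    then have "A * x * E \<le> c * E" using E_ge_1 by simp
    then have "(1 + \<beta>)^2 - A * x - c * E / x \<le> (1 + \<beta>)^2 - A * E - c * E / E"
      using x_range by (intro affine_minus_reciprocal_mono) simp_all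
    then show ?thesis unfolding Lambda_eq x_def[symmetric] E_def[symmetric] .
  qed
  then have "(SUP t\<in>{0..T}. Lambda K1 K2 T t) = Lambda K1 K2 T T"
    by (intro cSup_eq_maximum) (use assms(1) in auto)
  then show ?thesis using Lambda_at_endpoint[OF assms(2)[THEN less_imp_neq]] by simp
qed

theorem proposition2:
  fixes T K1 K2 :: real
  assumes "T > 0" and "K1 \<ge> 0" and "K2 \<noteq> 0" and "K1 + K2 \<ge> 0"
  shows "(K2 > 0 \<longrightarrow>
           (let \<beta> = K1 / K2;
                S = sqrt (1 + \<beta> / (2 + \<beta>) * (1 - exp (- (K2 * T / 2))))
            in (SUP t\<in>{0..T}. Lambda K1 K2 T t) =
                 (1 + \<beta>)^2 - (\<beta> + \<beta>^2 / 2) * S * exp (- (K2 * T / 4))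
                 - (\<beta> + \<beta>^2 - \<beta>^2 / 2 * exp (- (K2 * T / 2))) / S * exp (- (K2 * T / 4))))
       \<and> (K2 < 0 \<longrightarrow>
           (SUP t\<in>{0..T}. Lambda K1 K2 T t) =
             1/2 + 1/2 * (1 + K1 / K2 * (1 - exp (- (K2 * T / 2))))^2)"
  using SUP_Lambda_pos[OF assms(1,2)] SUP_Lambda_neg[OF less_imp_le[OF assms(1)] _ assms(4)]
  by (simp add: Let_def)

end
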